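(* For every positive integer $d$ there exists $c>0$ such that the following holds. Let $G$ be the intersection graph of $n\geq 2$ open axis-parallel boxes in $\mathbb{R}^d$, and let $H$ be a comparability graph on $V(G)$. If $G\cap H$ contains no clique of size $s$, then $\chi(G\cap H)\leq c\,s(\log n)^{d}$.
   Context: An open axis-parallel box in $\mathbb{R}^d$ is a set $\{x\in\mathbb{R}^d: a_i<x_i<b_i \ \forall i\in[d]\}$. The intersection graph of a family of boxes has the boxes as vertices, two being adjacent iff they intersect. A comparability graph is a graph $H$ for which there is a partial order $\prec$ on $V(H)$ such that $\{x,y\}\in E(H)$ iff $x\prec y$ or $y\prec x$. For graphs $G,H$ on the same vertex set, $G\cap H$ is the graph on that vertex set with edge set $E(G)\cap E(H)$. $\chi$ denotes chromatic number. *)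

theory Defs
  imports "HOL-Analysis.Analysis"
begin

definition comparability_graph :: "'v set \<Rightarrow> ('v \<Rightarrow> 'v \<Rightarrow> bool) \<Rightarrow> bool" where
  "comparability_graph V E \<longleftrightarrow>
     (\<exists>r. partial_order_on V r \<and>
          (\<forall>x\<in>V. \<forall>y\<in>V. E x y \<longleftrightarrow> x \<noteq> y \<and> ((x, y) \<in> r \<or> (y, x) \<in> r)))"

definition intersection_graph :: "('v \<Rightarrow> 'a set) \<Rightarrow> 'v \<Rightarrow> 'v \<Rightarrow> bool" where
  "intersection_graph B u v \<longleftrightarrow> u \<noteq> v \<and> B u \<inter> B v \<noteq> {}"

definition graph_inter :: "('v \<Rightarrow> 'v \<Rightarrow> bool) \<Rightarrow> ('v \<Rightarrow> 'v \<Rightarrow> bool) \<Rightarrow> 'v \<Rightarrow> 'v \<Rightarrow> bool" where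
  "graph_inter E F u v \<longleftrightarrow> E u v \<and> F u v"

definition has_clique :: "'v set \<Rightarrow> ('v \<Rightarrow> 'v \<Rightarrow> bool) \<Rightarrow> nat \<Rightarrow> bool" where
  "has_clique V E s \<longleftrightarrow>
     (\<exists>K. K \<subseteq> V \<and> finite K \<and> card K = s \<and> (\<forall>u\<in>K. \<forall>v\<in>K. u \<noteq> v \<longrightarrow> E u v))"

definition proper_colouring :: "'v set \<Rightarrow> ('v \<Rightarrow> 'v \<Rightarrow> bool) \<Rightarrow> nat \<Rightarrow> ('v \<Rightarrow> nat) \<Rightarrow> bool" where
  "proper_colouring V E k f \<longleftrightarrow>
     (\<forall>v\<in>V. f v < k) \<and> (\<forall>u\<in>V. \<forall>v\<in>V. E u v \<longrightarrow> f u \<noteq> f v)"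

definition chromatic_number :: "'v set \<Rightarrow> ('v \<Rightarrow> 'v \<Rightarrow> bool) \<Rightarrow> nat" where
  "chromatic_number V E = (LEAST k. \<exists>f. proper_colouring V E k f)"

end

theory Submission
  imports Defs "HOL-Library.Discrete_Functions"
begin

(* Induction on the set of coordinates still to be treated and, inside it, on log n. Split the
   boxes at a median t of their k-th coordinate into those lying left of t, those lying right of
   t, and those whose k-th side contains t. The first two classes are mutually non-adjacent and
   each contains at most half of the boxes, so they share one palette and are coloured
   recursively; the boxes of the third class pairwise overlap in coordinate k, which can
   therefore be dropped for them. When no coordinate is left, adjacency within the current set is
   just comparability, and colouring by the height of chains (Mirsky) uses s - 1 colours.
   Writing K(m, j) for the palette needed for fewer than 2^m boxes with j coordinates left,
   K(m+1, j+1) <= K(m, j+1) + K(m+1, j), which is solved by (s - 1) m^j. *)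

lemma has_clique_mono:
  assumes "has_clique V F s" "V \<subseteq> W" "\<And>u v. u \<in> V \<Longrightarrow> v \<in> V \<Longrightarrow> F u v \<Longrightarrow> E u v"
  shows "has_clique W E s"
proof -
  obtain K where "K \<subseteq> V" "finite K" "card K = s" "\<forall>u\<in>K. \<forall>v\<in>K. u \<noteq> v \<longrightarrow> F u v"
    using assms(1) unfolding has_clique_def by blast
  with assms(2,3) show ?thesis
    unfolding has_clique_def by (intro exI[of _ K]) blast
qed

lemma not_has_clique_two_le:
  assumes "\<not> has_clique V E s" "V \<noteq> {}"
  shows "2 \<le> s"
proof (rule ccontr)
  assume "\<not> 2 \<le> s"
  then have "s = 0 \<or> s = 1" by auto
  moreover have "has_clique V E 0"
    unfolding has_clique_def by (intro exI[of _ "{}"]) simp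
  moreover obtain v where "v \<in> V" using assms(2) by blast
  then have "has_clique V E 1"
    unfolding has_clique_def by (intro exI[of _ "{v}"]) simp
  ultimately show False using assms(1) by blast
qed

lemma proper_colouring_mono:
  "proper_colouring V E k f \<Longrightarrow> k \<le> l \<Longrightarrow> proper_colouring V E l f"
  by (auto simp: proper_colouring_def)

lemma proper_colouring_Un_disconnected:
  assumes "proper_colouring X E k f" "proper_colouring Y E k g"
    and "\<And>u v. u \<in> X \<Longrightarrow> v \<in> Y \<Longrightarrow> \<not> E u v \<and> \<not> E v u"
  shows "proper_colouring (X \<union> Y) E k (\<lambda>v. if v \<in> X then f v else g v)"
  using assms unfolding proper_colouring_def by auto

lemma proper_colouring_Un_shift:
  assumes "proper_colouring X E k f" "proper_colouring Y E l g"
  shows "proper_colouring (X \<union> Y) E (k + l) (\<lambda>v. if v \<in> X then f v else k + g v)"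
  using assms unfolding proper_colouring_def by auto

lemma proper_colouring_extend_isolated:
  assumes "proper_colouring W E k f" "0 < k"
    and "\<And>u v. u \<in> V \<Longrightarrow> v \<in> V \<Longrightarrow> E u v \<Longrightarrow> u \<in> W \<and> v \<in> W"
  shows "proper_colouring V E k (\<lambda>v. if v \<in> W then f v else 0)"
  using assms unfolding proper_colouring_def by auto

lemma chromatic_number_le: "proper_colouring V E k f \<Longrightarrow> chromatic_number V E \<le> k"
  unfolding chromatic_number_def by (blast intro: Least_le)

definition comparability :: "'a rel \<Rightarrow> 'a \<Rightarrow> 'a \<Rightarrow> bool" where
  "comparability r u v \<longleftrightarrow> u \<noteq> v \<and> ((u, v) \<in> r \<or> (v, u) \<in> r)"

definition chains_ending_at :: "'a rel \<Rightarrow> 'a set \<Rightarrow> 'a \<Rightarrow> 'a set set" where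
  "chains_ending_at r V v =
    {C. C \<subseteq> V \<and> v \<in> C \<and> (\<forall>c\<in>C. c \<noteq> v \<longrightarrow> (c, v) \<in> r) \<and> pairwise (comparability r) C}"

definition chain_height :: "'a rel \<Rightarrow> 'a set \<Rightarrow> 'a \<Rightarrow> nat" where
  "chain_height r V v = Max (card ` chains_ending_at r V v)"

lemma finite_chains_ending_at:
  assumes "finite V"
  shows "finite (chains_ending_at r V v)"
proof (rule finite_subset)
  show "chains_ending_at r V v \<subseteq> Pow V"
    by (auto simp: chains_ending_at_def)
qed (use assms in simp)

lemma card_le_chain_height:
  "finite V \<Longrightarrow> C \<in> chains_ending_at r V v \<Longrightarrow> card C \<le> chain_height r V v"
  unfolding chain_height_def by (simp add: finite_chains_ending_at)

lemma chain_height_pos: "finite V \<Longrightarrow> v \<in> V \<Longrightarrow> 0 < chain_height r V v"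
  using card_le_chain_height[of V "{v}" r v] by (simp add: chains_ending_at_def)

lemma chain_height_attained:
  assumes "finite V" "v \<in> V"
  shows "\<exists>C\<in>chains_ending_at r V v. card C = chain_height r V v"
proof -
  have "{v} \<in> chains_ending_at r V v"
    using assms(2) by (simp add: chains_ending_at_def)
  then have "chain_height r V v \<in> card ` chains_ending_at r V v"
    unfolding chain_height_def using finite_chains_ending_at[OF assms(1)] by (intro Max_in) auto
  then show ?thesis by auto
qed

lemma chain_height_less_if_no_clique:
  assumes "finite V" "\<not> has_clique V (comparability r) s" "v \<in> V"
  shows "chain_height r V v < s"
proof (rule ccontr)
  obtain C where C: "C \<in> chains_ending_at r V v" "card C = chain_height r V v"
    using chain_height_attained[OF assms(1,3)] by blast
  assume "\<not> chain_height r V v < s"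
  with C(2) obtain K where "K \<subseteq> C" "card K = s" "finite K"
    by (metis not_less obtain_subset_with_card_n)
  moreover have "C \<subseteq> V" "pairwise (comparability r) C"
    using C(1) by (auto simp: chains_ending_at_def)
  ultimately have "K \<subseteq> V" "pairwise (comparability r) K"
    by (auto intro: pairwise_subset)
  with \<open>card K = s\<close> \<open>finite K\<close> have "has_clique V (comparability r) s"
    unfolding has_clique_def pairwise_def by (intro exI[of _ K]) auto
  with assms(2) show False ..
qed

lemma chain_height_increasing:
  assumes "finite V" "trans r" "antisym r" "u \<in> V" "v \<in> V" "u \<noteq> v" "(u, v) \<in> r"
  shows "chain_height r V u < chain_height r V v"
proof -
  obtain C where C: "C \<in> chains_ending_at r V u" "card C = chain_height r V u"
    using chain_height_attained[OF assms(1,4)] by blast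
  have "v \<notin> C"
  proof
    assume "v \<in> C"
    with C(1) \<open>u \<noteq> v\<close> have "(v, u) \<in> r" by (auto simp: chains_ending_at_def)
    with \<open>(u, v) \<in> r\<close> \<open>antisym r\<close> \<open>u \<noteq> v\<close> show False by (metis antisymD)
  qed
  have "(c, v) \<in> r" if "c \<in> C" for c
  proof (cases "c = u")
    case False
    with C(1) that have "(c, u) \<in> r" by (auto simp: chains_ending_at_def)
    with \<open>(u, v) \<in> r\<close> \<open>trans r\<close> show ?thesis by (metis transD)
  qed (use \<open>(u, v) \<in> r\<close> in simp)
  then have "insert v C \<in> chains_ending_at r V v"
    using C(1) \<open>v \<in> V\<close> \<open>v \<notin> C\<close>
    by (auto simp: chains_ending_at_def pairwise_insert comparability_def)
  then have "card (insert v C) \<le> chain_height r V v"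
    by (rule card_le_chain_height[OF assms(1)])
  moreover have "finite C"
    using C(1) \<open>finite V\<close> by (auto simp: chains_ending_at_def intro: finite_subset)
  ultimately show ?thesis
    using C(2) \<open>v \<notin> C\<close> by simp
qed

lemma comparability_colouring:
  assumes "finite V" "trans r" "antisym r" "\<not> has_clique V (comparability r) s"
  shows "proper_colouring V (comparability r) (s - 1) (\<lambda>v. chain_height r V v - 1)"
  unfolding proper_colouring_def
proof (intro conjI ballI impI)
  fix v assume "v \<in> V"
  with assms have "0 < chain_height r V v" "chain_height r V v < s"
    by (simp_all add: chain_height_pos chain_height_less_if_no_clique)
  then show "chain_height r V v - 1 < s - 1" by arith
next
  fix u v assume "u \<in> V" "v \<in> V" "comparability r u v"
  with assms(1-3) have "chain_height r V u \<noteq> chain_height r V v"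
    by (auto simp: comparability_def dest: chain_height_increasing)
  moreover have "0 < chain_height r V u" "0 < chain_height r V v"
    using assms(1) \<open>u \<in> V\<close> \<open>v \<in> V\<close> by (simp_all add: chain_height_pos)
  ultimately show "chain_height r V u - 1 \<noteq> chain_height r V v - 1"
    by arith
qed

lemma left_endpoint_below_majority:
  fixes A B :: "'v \<Rightarrow> real"
  assumes "finite V" "\<And>v. v \<in> V \<Longrightarrow> A v < B v" and big: "card V < 2 * card {v\<in>V. B v \<le> t}"
  shows "\<exists>x\<in>A ` V. x < t \<and> 2 * card {v\<in>V. x < A v} \<le> card V"
proof -
  let ?L = "{v\<in>V. B v \<le> t}"
  have "?L \<noteq> {}"
    using big by (metis card.empty less_zeroE mult_0_right)
  define x where "x = Max (A ` ?L)"
  have "x \<in> A ` ?L"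
    unfolding x_def using \<open>finite V\<close> \<open>?L \<noteq> {}\<close> by (intro Max_in) auto
  with assms(2) have "x \<in> A ` V" "x < t" by force+
  have "A v \<le> x" if "v \<in> ?L" for v
    unfolding x_def using \<open>finite V\<close> that by (intro Max_ge) auto
  then have "{v\<in>V. x < A v} \<subseteq> V - ?L"
    by force
  then have "card {v\<in>V. x < A v} \<le> card (V - ?L)"
    using \<open>finite V\<close> by (intro card_mono) auto
  also have "\<dots> = card V - card ?L"
    using \<open>finite V\<close> by (intro card_Diff_subset) auto
  finally have "2 * card {v\<in>V. x < A v} \<le> card V"
    using big by simp
  with \<open>x \<in> A ` V\<close> \<open>x < t\<close> show ?thesis by blast
qed

lemma interval_median_split:
  fixes A B :: "'v \<Rightarrow> real"
  assumes "finite V" and nonempty: "\<And>v. v \<in> V \<Longrightarrow> A v < B v"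
  shows "\<exists>t. 2 * card {v\<in>V. B v \<le> t} \<le> card V \<and> 2 * card {v\<in>V. t < A v} \<le> card V"
proof (cases "V = {}")
  case False
  define right where "right x = {v\<in>V. x < A v}" for x
  define T where "T = {x \<in> A ` V. 2 * card (right x) \<le> card V}"
  have "A v \<le> Max (A ` V)" if "v \<in> V" for v
    using \<open>finite V\<close> that by (intro Max_ge) auto
  then have "right (Max (A ` V)) = {}"
    by (auto simp: right_def not_less)
  then have "Max (A ` V) \<in> T"
    using \<open>finite V\<close> False by (simp add: T_def)
  then have "finite T" "T \<noteq> {}"
    using \<open>finite V\<close> by (auto simp: T_def)
  define t where "t = Min T"
  have "t \<in> T"
    unfolding t_def using \<open>finite T\<close> \<open>T \<noteq> {}\<close> by (rule Min_in)
  moreover have "2 * card {v\<in>V. B v \<le> t} \<le> card V"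
  proof (rule ccontr)
    assume "\<not> 2 * card {v\<in>V. B v \<le> t} \<le> card V"
    then obtain x where "x \<in> T" "x < t"
      using left_endpoint_below_majority[OF assms(1) nonempty] by (force simp: T_def right_def not_le)
    with \<open>finite T\<close> show False
      unfolding t_def by (meson Min_le not_le)
  qed
  ultimately show ?thesis
    by (auto simp: T_def right_def)
qed simp

definition overlap_on :: "'k set \<Rightarrow> ('k \<Rightarrow> 'v \<Rightarrow> real) \<Rightarrow> ('k \<Rightarrow> 'v \<Rightarrow> real) \<Rightarrow> 'v \<Rightarrow> 'v \<Rightarrow> bool" where
  "overlap_on K A B u v \<longleftrightarrow> (\<forall>k\<in>K. max (A k u) (A k v) < min (B k u) (B k v))"

lemma pairwise_overlap_on_Un:
  "pairwise (overlap_on K A B) V \<Longrightarrow> pairwise (overlap_on L A B) V \<Longrightarrow>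
   pairwise (overlap_on (K \<union> L) A B) V"
  by (auto simp: pairwise_def overlap_on_def)

lemma box_Int_box_ne_empty_cart:
  fixes a b c d :: "real^'n"
  shows "box a b \<inter> box c d \<noteq> {} \<longleftrightarrow> (\<forall>k. max (a$k) (c$k) < min (b$k) (d$k))"
  by (auto simp: disjoint_interval_cart(4) not_le)

lemma power_Suc_add_le: "m ^ Suc j + Suc m ^ j \<le> Suc m ^ Suc (j::nat)"
proof -
  have "m * m ^ j \<le> m * Suc m ^ j" by (simp add: power_mono)
  then show ?thesis by simp
qed

text \<open>The k-th side of the box of vertex v is the open interval (A k v, B k v).\<close>

locale box_comparability_graph =
  fixes W :: "'v set" and r :: "'v rel" and A B :: "'k \<Rightarrow> 'v \<Rightarrow> real"
    and E :: "'v \<Rightarrow> 'v \<Rightarrow> bool"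
  assumes trans: "trans r" and antisym: "antisym r"
    and nonempty: "\<And>v k. v \<in> W \<Longrightarrow> A k v < B k v"
    and adjacent_iff: "\<And>u v. u \<in> W \<Longrightarrow> v \<in> W \<Longrightarrow>
      E u v \<longleftrightarrow> comparability r u v \<and> overlap_on UNIV A B u v"
begin

lemma colouring_pairwise_overlapping:
  assumes "\<not> has_clique W E s" "finite V" "V \<subseteq> W" "pairwise (overlap_on UNIV A B) V"
  shows "\<exists>f. proper_colouring V E (s - 1) f"
proof -
  have "\<not> has_clique V (comparability r) s"
  proof
    assume "has_clique V (comparability r) s"
    then have "has_clique W E s"
    proof (rule has_clique_mono)
      fix u v assume "u \<in> V" "v \<in> V" "comparability r u v"
      with assms(3,4) show "E u v"
        using adjacent_iff[of u v] by (auto simp: pairwise_def comparability_def)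
    qed (fact assms(3))
    with assms(1) show False ..
  qed
  then have f: "proper_colouring V (comparability r) (s - 1) (\<lambda>v. chain_height r V v - 1)"
    by (rule comparability_colouring[OF assms(2) trans antisym])
  have "comparability r u v" if "u \<in> V" "v \<in> V" "E u v" for u v
  proof -
    have "u \<in> W" "v \<in> W" using that assms(3) by auto
    with \<open>E u v\<close> show ?thesis using adjacent_iff by simp
  qed
  with f have "proper_colouring V E (s - 1) (\<lambda>v. chain_height r V v - 1)"
    unfolding proper_colouring_def by blast
  then show ?thesis by blast
qed

lemma split_colouring:
  assumes "finite V" "V \<subseteq> W" "card V < 2 * N"
    and small: "\<And>U. U \<subseteq> V \<Longrightarrow> card U < N \<Longrightarrow> \<exists>f. proper_colouring U E K\<^sub>1 f"
    and crossing: "\<And>U. U \<subseteq> V \<Longrightarrow> pairwise (overlap_on {k} A B) U \<Longrightarrow>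
      \<exists>f. proper_colouring U E K\<^sub>2 f"
  shows "\<exists>f. proper_colouring V E (K\<^sub>1 + K\<^sub>2) f"
proof -
  obtain t where t: "2 * card {v\<in>V. B k v \<le> t} \<le> card V" "2 * card {v\<in>V. t < A k v} \<le> card V"
    using interval_median_split[of V "A k" "B k"] assms(1,2) nonempty by blast
  define L where "L = {v\<in>V. B k v \<le> t}"
  define R where "R = {v\<in>V. t < A k v}"
  \<comment> \<open>Closed on the left, so that L, R and M cover V.\<close>
  define M where "M = {v\<in>V. A k v \<le> t \<and> t < B k v}"
  obtain f\<^sub>L where f\<^sub>L: "proper_colouring L E K\<^sub>1 f\<^sub>L"
    using small[of L] t(1) assms(3) by (auto simp: L_def)
  obtain f\<^sub>R where f\<^sub>R: "proper_colouring R E K\<^sub>1 f\<^sub>R"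
    using small[of R] t(2) assms(3) by (auto simp: R_def)
  have "pairwise (overlap_on {k} A B) M"
    by (auto simp: pairwise_def overlap_on_def M_def)
  then obtain f\<^sub>M where f\<^sub>M: "proper_colouring M E K\<^sub>2 f\<^sub>M"
    using crossing[of M] by (auto simp: M_def)
  have "\<not> E u v \<and> \<not> E v u" if "u \<in> L" "v \<in> R" for u v
  proof -
    have "B k u \<le> t" "t < A k v" "u \<in> W" "v \<in> W"
      using that assms(2) by (auto simp: L_def R_def)
    then have "\<not> overlap_on UNIV A B u v" "\<not> overlap_on UNIV A B v u"
      unfolding overlap_on_def by (auto intro!: exI[of _ k])
    with \<open>u \<in> W\<close> \<open>v \<in> W\<close> show ?thesis
      using adjacent_iff by simp
  qed
  then have "proper_colouring (L \<union> R) E K\<^sub>1 (\<lambda>v. if v \<in> L then f\<^sub>L v else f\<^sub>R v)"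
    by (rule proper_colouring_Un_disconnected[OF f\<^sub>L f\<^sub>R])
  from proper_colouring_Un_shift[OF this f\<^sub>M]
  have "\<exists>f. proper_colouring (L \<union> R \<union> M) E (K\<^sub>1 + K\<^sub>2) f" by blast
  moreover have "L \<union> R \<union> M = V"
    by (auto simp: L_def R_def M_def)
  ultimately show ?thesis by simp
qed

lemma colouring_overlapping_outside:
  assumes "\<not> has_clique W E s" and "finite J"
    and "finite V" "V \<subseteq> W" "card V < 2 ^ m" "pairwise (overlap_on (- J) A B) V"
  shows "\<exists>f. proper_colouring V E ((s - 1) * m ^ card J) f"
  using assms(2-)
proof (induction J arbitrary: V m rule: finite_induct)
  case empty
  then show ?case using colouring_pairwise_overlapping[OF assms(1)] by simp
next
  case (insert k J)
  from insert.prems show ?case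
  proof (induction m arbitrary: V)
    case 0
    then show ?case by (simp add: proper_colouring_def)
  next
    case (Suc m)
    let ?K\<^sub>1 = "(s - 1) * m ^ card (insert k J)" and ?K\<^sub>2 = "(s - 1) * Suc m ^ card J"
    have "\<exists>f. proper_colouring V E (?K\<^sub>1 + ?K\<^sub>2) f"
    proof (rule split_colouring)
      show "finite V" "V \<subseteq> W" "card V < 2 * 2 ^ m"
        using Suc.prems by auto
    next
      fix U assume "U \<subseteq> V" "card U < 2 ^ m"
      with Suc.prems show "\<exists>f. proper_colouring U E ?K\<^sub>1 f"
        by (intro Suc.IH) (auto intro: finite_subset pairwise_subset)
    next
      fix U assume "U \<subseteq> V" and crossing: "pairwise (overlap_on {k} A B) U"
      have "pairwise (overlap_on (- insert k J) A B) U"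
        using Suc.prems(4) \<open>U \<subseteq> V\<close> by (rule pairwise_subset)
      with crossing have "pairwise (overlap_on ({k} \<union> - insert k J) A B) U"
        by (rule pairwise_overlap_on_Un)
      moreover have "{k} \<union> - insert k J = - J"
        using \<open>k \<notin> J\<close> by auto
      moreover have "card U < 2 ^ Suc m"
        using Suc.prems \<open>U \<subseteq> V\<close> card_mono[of V U] by simp
      ultimately show "\<exists>f. proper_colouring U E ?K\<^sub>2 f"
        using Suc.prems \<open>U \<subseteq> V\<close> by (intro insert.IH) (auto intro: finite_subset)
    qed
    moreover have "?K\<^sub>1 + ?K\<^sub>2 \<le> (s - 1) * Suc m ^ card (insert k J)"
      using power_Suc_add_le[of m "card J"] insert.hyps
      by (simp flip: add_mult_distrib2)
    ultimately show ?case
      by (blast intro: proper_colouring_mono)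
  qed
qed

end

lemma box_comparability_graph_of_boxes:
  fixes a b :: "'v \<Rightarrow> real^'d"
  assumes "trans r" "antisym r" "\<And>u v. u \<in> V \<Longrightarrow> v \<in> V \<Longrightarrow> H u v \<longleftrightarrow> comparability r u v"
  shows "box_comparability_graph {i \<in> V. box (a i) (b i) \<noteq> {}} r (\<lambda>k i. a i $ k) (\<lambda>k i. b i $ k)
    (graph_inter (intersection_graph (\<lambda>i. box (a i) (b i))) H)"
proof
  show "a v $ k < b v $ k" if "v \<in> {i \<in> V. box (a i) (b i) \<noteq> {}}" for v k
    using that by (auto simp: interval_eq_empty_cart not_le)
  show "graph_inter (intersection_graph (\<lambda>i. box (a i) (b i))) H u v \<longleftrightarrow>
      comparability r u v \<and> overlap_on UNIV (\<lambda>k i. a i $ k) (\<lambda>k i. b i $ k) u v"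
    if "u \<in> {i \<in> V. box (a i) (b i) \<noteq> {}}" "v \<in> {i \<in> V. box (a i) (b i) \<noteq> {}}" for u v
    using that assms(3) by (auto simp: graph_inter_def intersection_graph_def
        box_Int_box_ne_empty_cart overlap_on_def comparability_def)
qed (fact assms)+

lemma chromatic_number_box_comparability_le:
  fixes a b :: "'v \<Rightarrow> real^'d" and H :: "'v \<Rightarrow> 'v \<Rightarrow> bool"
  defines "G \<equiv> graph_inter (intersection_graph (\<lambda>i. box (a i) (b i))) H"
  assumes "finite V" "V \<noteq> {}" "card V < 2 ^ m"
    and "comparability_graph V H" "\<not> has_clique V G s"
  shows "chromatic_number V G \<le> (s - 1) * m ^ CARD('d)"
proof -
  obtain r where "partial_order_on V r"
    and H_iff: "\<And>u v. u \<in> V \<Longrightarrow> v \<in> V \<Longrightarrow> H u v \<longleftrightarrow> comparability r u v"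
    using assms(5) unfolding comparability_graph_def comparability_def by blast
  then have "trans r" "antisym r"
    by (auto simp: partial_order_on_def preorder_on_def)
  \<comment> \<open>Vertices with empty boxes are isolated; they are set aside because the median split needs
    nonempty intervals.\<close>
  define W where "W = {i \<in> V. box (a i) (b i) \<noteq> {}}"
  interpret box_comparability_graph W r "\<lambda>k i. a i $ k" "\<lambda>k i. b i $ k" G
    unfolding W_def G_def using \<open>trans r\<close> \<open>antisym r\<close> H_iff by (rule box_comparability_graph_of_boxes)
  have "\<not> has_clique W G s"
  proof
    assume "has_clique W G s"
    then have "has_clique V G s" by (rule has_clique_mono) (auto simp: W_def)
    with assms(6) show False ..
  qed
  moreover have "card W < 2 ^ m"
    using assms(2,4) card_mono[of V W] by (auto simp: W_def)
  ultimately obtain f where "proper_colouring W G ((s - 1) * m ^ CARD('d)) f"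
    using colouring_overlapping_outside[of s UNIV W m] assms(2)
    by (auto simp: W_def overlap_on_def pairwise_def)
  moreover have "0 < (s - 1) * m ^ CARD('d)"
    using not_has_clique_two_le[OF assms(6,3)] \<open>card V < 2 ^ m\<close> \<open>V \<noteq> {}\<close> \<open>finite V\<close>
    by (auto simp: card_gt_0_iff[symmetric] intro!: Nat.gr0I)
  ultimately have "proper_colouring V G ((s - 1) * m ^ CARD('d)) (\<lambda>v. if v \<in> W then f v else 0)"
    by (rule proper_colouring_extend_isolated)
      (auto simp: G_def W_def graph_inter_def intersection_graph_def)
  then show ?thesis by (rule chromatic_number_le)
qed

lemma Suc_floor_log_le_log:
  assumes "2 \<le> n"
  shows "real (Suc (floor_log n)) \<le> 2 * log 2 n"
proof -
  have "floor_log n \<le> log 2 n"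
    using assms by (intro le_log2_of_power floor_log_exp2_le) simp
  moreover have "1 \<le> log 2 n"
    using le_log2_of_power[of 1 n] assms by simp
  ultimately show ?thesis by simp
qed

theorem lemma3p2:
  shows "\<exists>c::real. c > 0 \<and>
    (\<forall>(n::nat) (a::nat \<Rightarrow> real^'d) (b::nat \<Rightarrow> real^'d) (H::nat \<Rightarrow> nat \<Rightarrow> bool) (s::nat).
       n \<ge> 2 \<longrightarrow>
       comparability_graph {..<n} H \<longrightarrow>
       \<not> has_clique {..<n} (graph_inter (intersection_graph (\<lambda>i. box (a i) (b i))) H) s \<longrightarrow>
       real (chromatic_number {..<n} (graph_inter (intersection_graph (\<lambda>i. box (a i) (b i))) H))
         \<le> c * real s * (ln (real n)) ^ CARD('d))"
proof (intro exI[of _ "(2 / ln 2) ^ CARD('d)"] conjI allI impI)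
  fix n s :: nat and a b :: "nat \<Rightarrow> real^'d" and H :: "nat \<Rightarrow> nat \<Rightarrow> bool"
  let ?G = "graph_inter (intersection_graph (\<lambda>i. box (a i) (b i))) H"
  assume "2 \<le> n" "comparability_graph {..<n} H" "\<not> has_clique {..<n} ?G s"
  define m where "m = Suc (floor_log n)"
  have "n < 2 ^ m"
    using floor_log_exp2_gt[of n] by (simp add: m_def)
  with \<open>2 \<le> n\<close> \<open>comparability_graph {..<n} H\<close> \<open>\<not> has_clique {..<n} ?G s\<close>
  have "chromatic_number {..<n} ?G \<le> (s - 1) * m ^ CARD('d)"
    by (intro chromatic_number_box_comparability_le) (auto simp: lessThan_empty_iff)
  then have "real (chromatic_number {..<n} ?G) \<le> real s * real m ^ CARD('d)"
    by (rule order_trans[OF of_nat_mono]) (simp add: mult_right_mono)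
  also have "\<dots> \<le> real s * (2 * log 2 n) ^ CARD('d)"
    using Suc_floor_log_le_log[OF \<open>2 \<le> n\<close>] unfolding m_def
    by (intro mult_left_mono power_mono) simp_all
  also have "\<dots> = real s * (2 / ln 2 * ln (real n)) ^ CARD('d)"
    by (simp add: log_def)
  also have "\<dots> = (2 / ln 2) ^ CARD('d) * real s * ln (real n) ^ CARD('d)"
    unfolding power_mult_distrib by (simp only: ac_simps)
  finally show "real (chromatic_number {..<n} ?G)
      \<le> (2 / ln 2) ^ CARD('d) * real s * ln (real n) ^ CARD('d)" .
qed simp

end
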